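(* Let $\delta_0>0$. There exists $k_0$ such that for all $k\ge k_0$ and all $\delta\in[\delta_0,1-2/k]$ with $\delta k+k-1$ an odd integer, every point $(b_1,\dots,b_k,b_{12},\dots,b_{(k-1)k})\in KTW_P$ satisfies \[\delta k\alpha+\beta\ge\frac{(\delta^2k-1)|\Delta|}{4}+\frac12 .\]
   Context: $P(x)=\operatorname{sign}(\delta k x_1+\sum_{i=2}^kx_i)$. For $x\in\{-1,1\}^k$ let $p(x)\in\{-1,1\}^{k+\binom k2}$ be the vector $(x_1,\dots,x_k,x_1x_2,x_1x_3,\dots,x_{k-1}x_k)$; $KTW_P$ is the convex hull of $\{p(x):P(x)=1\}$, with coordinates named $b_i$ ($i\in[k]$) and $b_{ij}$ ($i<j$). Define $\alpha=b_1$, $\beta=\sum_{i=2}^kb_i$, $E=\frac{\delta^2k^2}{2}-\frac k2+1$, and $\Delta$ by $\sum_{2\le i<j\le k}b_{ij}=E(1+\Delta)$. *)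

theory Defs
  imports "HOL-Analysis.Analysis"
begin

text \<open>Points x of {-1,1}^k are represented as functions nat => real, with
  x i in {-1,1} for i in {1..k} and x i = 0 outside (so the cube is a finite set).\<close>
definition cube :: "nat \<Rightarrow> (nat \<Rightarrow> real) set" where
  "cube k = {x. \<forall>i. (i \<in> {1..k} \<longrightarrow> x i \<in> {-1, 1}) \<and> (i \<notin> {1..k} \<longrightarrow> x i = 0)}"

definition Ppred :: "real \<Rightarrow> nat \<Rightarrow> (nat \<Rightarrow> real) \<Rightarrow> real" where
  "Ppred \<delta> k x = sgn (\<delta> * real k * x 1 + (\<Sum>i=2..k. x i))"

definition plin :: "nat \<Rightarrow> (nat \<Rightarrow> real) \<Rightarrow> nat \<Rightarrow> real" where
  "plin k x = (\<lambda>i. if i \<in> {1..k} then x i else 0)"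

definition pquad :: "nat \<Rightarrow> (nat \<Rightarrow> real) \<Rightarrow> nat \<Rightarrow> nat \<Rightarrow> real" where
  "pquad k x = (\<lambda>i j. if 1 \<le> i \<and> i < j \<and> j \<le> k then x i * x j else 0)"

text \<open>KTW_P: convex hull of the finite set {p(x) : P(x) = 1}, written out as the set of
  convex combinations of its points (cf. convex_hull_finite).\<close>
definition KTW :: "real \<Rightarrow> nat \<Rightarrow> ((nat \<Rightarrow> real) \<times> (nat \<Rightarrow> nat \<Rightarrow> real)) set" where
  "KTW \<delta> k = {(bl, bq). \<exists>u :: (nat \<Rightarrow> real) \<Rightarrow> real.
      (\<forall>x\<in>{x \<in> cube k. Ppred \<delta> k x = 1}. 0 \<le> u x)
    \<and> (\<Sum>x\<in>{x \<in> cube k. Ppred \<delta> k x = 1}. u x) = 1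
    \<and> bl = (\<lambda>i. \<Sum>x\<in>{x \<in> cube k. Ppred \<delta> k x = 1}. u x * plin k x i)
    \<and> bq = (\<lambda>i j. \<Sum>x\<in>{x \<in> cube k. Ppred \<delta> k x = 1}. u x * pquad k x i j)}"

end

theory Submission imports Defs begin

text \<open>Write D = \<delta>k (an integer) and s = x_2 + \<dots> + x_k for a vertex x with P(x) = 1.
  Then L(x) = \<delta>k x_1 + s = \<plusminus>D + s is a positive integer and the tail quadratic sum is
  (s^2 - (k - 1))/2, so the vertex's \<Delta> equals (s^2 - D^2 - 1)/(D^2 - k + 2). The factorization
  s^2 - D^2 - 1 = L(s \<mp> D) - 1 with |s \<mp> D| < 2k gives |s^2 - D^2 - 1| \<le> 2k(2L - 1), which is
  the inequality at every vertex. The left-hand side is affine and |\<Delta>| is convex in the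
  point, so the inequality holds on the whole convex hull, for every k.\<close>

definition lin_obj :: "real \<Rightarrow> nat \<Rightarrow> (nat \<Rightarrow> real) \<Rightarrow> real" where
  "lin_obj \<delta> k x = \<delta> * real k * x 1 + (\<Sum>i=2..k. x i)"

definition quad_tail :: "nat \<Rightarrow> (nat \<Rightarrow> real) \<Rightarrow> real" where
  "quad_tail k x = (\<Sum>j=2..k. \<Sum>i=2..<j. x i * x j)"

lemma Ppred_eq_1_iff: "Ppred \<delta> k x = 1 \<longleftrightarrow> lin_obj \<delta> k x > 0"
  by (simp add: Ppred_def lin_obj_def sgn_1_pos)

lemma convex_comb_abs_le:
  fixes u f g :: "'a \<Rightarrow> real"
  assumes u_nonneg: "\<forall>x\<in>S. 0 \<le> u x" and u_sum: "sum u S = 1" and "0 \<le> c"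
    and bound: "\<forall>x\<in>S. c * \<bar>f x\<bar> + a \<le> g x"
  shows "c * \<bar>\<Sum>x\<in>S. u x * f x\<bar> + a \<le> (\<Sum>x\<in>S. u x * g x)"
proof -
  have "\<bar>\<Sum>x\<in>S. u x * f x\<bar> \<le> (\<Sum>x\<in>S. u x * \<bar>f x\<bar>)"
    using sum_abs[of "\<lambda>x. u x * f x" S] u_nonneg by (simp add: abs_mult)
  then have "c * \<bar>\<Sum>x\<in>S. u x * f x\<bar> + a \<le> c * (\<Sum>x\<in>S. u x * \<bar>f x\<bar>) + a * sum u S"
    using \<open>0 \<le> c\<close> u_sum by (simp add: mult_left_mono)
  also have "\<dots> = (\<Sum>x\<in>S. u x * (c * \<bar>f x\<bar> + a))"
    by (simp add: sum.distrib sum_distrib_left sum_distrib_right algebra_simps)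
  also have "\<dots> \<le> (\<Sum>x\<in>S. u x * g x)"
    using bound u_nonneg by (intro sum_mono mult_left_mono) auto
  finally show ?thesis .
qed

lemma KTW_memE:
  assumes "(bl, bq) \<in> KTW \<delta> k" "1 \<le> k"
  defines "S \<equiv> {x \<in> cube k. Ppred \<delta> k x = 1}"
  obtains u where "\<forall>x\<in>S. 0 \<le> u x" "sum u S = 1"
    "\<delta> * real k * bl 1 + (\<Sum>i=2..k. bl i) = (\<Sum>x\<in>S. u x * lin_obj \<delta> k x)"
    "(\<Sum>j=2..k. \<Sum>i=2..<j. bq i j) = (\<Sum>x\<in>S. u x * quad_tail k x)"
proof -
  from assms(1) obtain u where u: "\<forall>x\<in>S. 0 \<le> u x" "sum u S = 1"
    and bl: "bl = (\<lambda>i. \<Sum>x\<in>S. u x * plin k x i)"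
    and bq: "bq = (\<lambda>i j. \<Sum>x\<in>S. u x * pquad k x i j)"
    unfolding KTW_def S_def by auto
  have "(\<Sum>i=2..k. bl i) = (\<Sum>i=2..k. \<Sum>x\<in>S. u x * x i)"
    by (intro sum.cong) (auto simp: bl plin_def)
  also have "\<dots> = (\<Sum>x\<in>S. u x * (\<Sum>i=2..k. x i))"
    by (subst sum.swap) (simp add: sum_distrib_left)
  finally have lin: "\<delta> * real k * bl 1 + (\<Sum>i=2..k. bl i) = (\<Sum>x\<in>S. u x * lin_obj \<delta> k x)"
    using \<open>1 \<le> k\<close> by (simp add: bl plin_def lin_obj_def sum.distrib sum_distrib_left algebra_simps)
  have "(\<Sum>j=2..k. \<Sum>i=2..<j. bq i j) = (\<Sum>j=2..k. \<Sum>i=2..<j. \<Sum>x\<in>S. u x * (x i * x j))"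
    by (intro sum.cong) (auto simp: bq pquad_def)
  also have "\<dots> = (\<Sum>x\<in>S. u x * quad_tail k x)"
    unfolding quad_tail_def sum_distrib_left
    by (subst sum.swap) (simp add: sum.swap[of _ S])
  finally show thesis using that u lin by blast
qed

lemma square_sum_atLeastAtMost:
  fixes f :: "nat \<Rightarrow> 'a::comm_ring_1"
  shows "(\<Sum>i=m..n. f i)\<^sup>2 = (\<Sum>i=m..n. (f i)\<^sup>2) + 2 * (\<Sum>j=m..n. \<Sum>i=m..<j. f i * f j)"
proof (induction n)
  case 0
  then show ?case by (cases m) (simp_all add: power2_eq_square)
next
  case (Suc n)
  show ?case
  proof (cases "m \<le> Suc n")
    case False
    then show ?thesis by simp
  next
    case True
    have "(\<Sum>i=m..Suc n. f i)\<^sup>2 = ((\<Sum>i=m..n. f i) + f (Suc n))\<^sup>2"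
      using True by simp
    also have "\<dots> = (\<Sum>i=m..n. f i)\<^sup>2 + 2 * (\<Sum>i=m..n. f i * f (Suc n)) + (f (Suc n))\<^sup>2"
      by (simp add: power2_eq_square algebra_simps sum_distrib_left sum_distrib_right)
    finally show ?thesis
      using Suc True by (simp add: atLeastLessThanSuc_atLeastAtMost algebra_simps)
  qed
qed

lemma cube_tail_sum_int:
  assumes "x \<in> cube k" "1 \<le> k"
  obtains s :: int where "(\<Sum>i=2..k. x i) = of_int s" "\<bar>s\<bar> \<le> int k - 1"
proof -
  have x_tail: "x i \<in> {-1, 1}" if "i \<in> {2..k}" for i
    using assms that unfolding cube_def by auto
  have "(\<Sum>i=2..k. x i) \<in> \<int>"
    using x_tail by (intro Ints_sum) (metis Ints_1 Ints_minus insert_iff singletonD)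
  then obtain s where s: "(\<Sum>i=2..k. x i) = of_int s" by (auto elim: Ints_cases)
  have x_abs: "\<bar>x i\<bar> = 1" if "i \<in> {2..k}" for i
    using x_tail[OF that] by auto
  have "\<bar>\<Sum>i=2..k. x i\<bar> \<le> (\<Sum>i=2..k. \<bar>x i\<bar>)" by (rule sum_abs)
  also have "\<dots> = (\<Sum>i=2..k. 1)"
    using x_abs by (rule sum.cong[OF refl])
  also have "\<dots> = real k - 1"
    using assms(2) by simp
  finally show thesis using that[OF s] s by linarith
qed

lemma quad_tail_cube:
  assumes "x \<in> cube k" "1 \<le> k"
  shows "quad_tail k x = ((\<Sum>i=2..k. x i)\<^sup>2 - (real k - 1)) / 2"
proof -
  have "x i \<in> {-1, 1}" if "i \<in> {2..k}" for i
    using assms(1) that unfolding cube_def by auto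
  then have "(\<Sum>i=2..k. (x i)\<^sup>2) = (\<Sum>i=2..k. 1)"
    by (intro sum.cong refl) fastforce
  then show ?thesis
    using square_sum_atLeastAtMost[of x 2 k] assms(2) by (simp add: quad_tail_def)
qed

lemma int_sq_diff_bound:
  fixes k D s e :: int
  assumes "0 \<le> D" "D \<le> k - 2" "\<bar>s\<bar> \<le> k - 1" "e = 1 \<or> e = -1" "1 \<le> e * D + s"
  shows "\<bar>s\<^sup>2 - D\<^sup>2 - 1\<bar> \<le> 2 * k * (2 * (e * D + s) - 1)"
  using assms(4)
proof
  assume "e = 1"
  define L where "L = D + s"
  have L: "1 \<le> L" using assms \<open>e = 1\<close> by (simp add: L_def)
  have "\<bar>L * (s - D)\<bar> \<le> L * (2 * k - 1)"
    using assms L by (simp add: abs_mult L_def mult_left_mono)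
  moreover have "1 * (2 * k + 1) \<le> L * (2 * k + 1)"
    using assms L by (intro mult_right_mono) auto
  moreover have "s\<^sup>2 - D\<^sup>2 - 1 = L * (s - D) - 1"
    by (simp add: L_def power2_eq_square algebra_simps)
  ultimately show ?thesis using \<open>e = 1\<close> by (simp add: L_def abs_le_iff algebra_simps)
next
  assume "e = -1"
  define L where "L = s - D"
  have L: "1 \<le> L" using assms \<open>e = -1\<close> by (simp add: L_def)
  have "0 \<le> L * (s + D)" "L * (s + D) \<le> L * (2 * k - 3)"
    using assms L by (simp_all add: L_def mult_left_mono)
  moreover have "1 * (2 * k + 3) \<le> L * (2 * k + 3)"
    using assms L by (intro mult_right_mono) auto
  moreover have "s\<^sup>2 - D\<^sup>2 - 1 = L * (s + D) - 1"
    by (simp add: L_def power2_eq_square algebra_simps)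
  ultimately show ?thesis using \<open>e = -1\<close> by (simp add: L_def algebra_simps)
qed

lemma vertex_bound:
  assumes x: "x \<in> cube k" and pos: "lin_obj \<delta> k x > 0"
    and D: "\<delta> * real k = of_int D" "0 \<le> D" "D \<le> int k - 2"
  defines "E \<equiv> \<delta>\<^sup>2 * (real k)\<^sup>2 / 2 - real k / 2 + 1"
  shows "max 0 ((\<delta>\<^sup>2 * real k - 1) / 4) * \<bar>quad_tail k x / E - 1\<bar> + 1 / 2 \<le> lin_obj \<delta> k x"
proof -
  have k: "2 \<le> k" using D by linarith
  obtain s :: int where s: "(\<Sum>i=2..k. x i) = of_int s" "\<bar>s\<bar> \<le> int k - 1"
    using cube_tail_sum_int[OF x] k by auto
  obtain e :: int where e: "x 1 = of_int e" "e = 1 \<or> e = -1"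
    using x k unfolding cube_def by (force intro: that[of 1] that[of "-1"])
  have L: "lin_obj \<delta> k x = of_int (e * D + s)"
    using e(1) s(1) D(1) by (simp add: lin_obj_def algebra_simps)
  have "0 < e * D + s"
    using pos unfolding L by (simp only: of_int_0_less_iff)
  then have L_ge_1: "1 \<le> lin_obj \<delta> k x"
    unfolding L by (simp only: of_int_1_le_iff int_one_le_iff_zero_less)
  have "\<bar>s\<^sup>2 - D\<^sup>2 - 1\<bar> \<le> 2 * int k * (2 * (e * D + s) - 1)"
    using int_sq_diff_bound[OF D(2,3) s(2) e(2)] L_ge_1 unfolding L by simp
  then have "of_int \<bar>s\<^sup>2 - D\<^sup>2 - 1\<bar> \<le> (of_int (2 * int k * (2 * (e * D + s) - 1)) :: real)"
    by (simp only: of_int_le_iff)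
  then have sq_bound: "\<bar>(of_int s)\<^sup>2 - (of_int D)\<^sup>2 - 1\<bar> \<le> 2 * real k * (2 * lin_obj \<delta> k x - 1)"
    unfolding L by simp
  show ?thesis
  proof (cases "\<delta>\<^sup>2 * real k \<le> 1")
    case True
    then show ?thesis using L_ge_1 by simp
  next
    case False
    have "(of_int D)\<^sup>2 = (\<delta>\<^sup>2 * real k) * real k"
      unfolding D(1)[symmetric] by (simp add: power2_eq_square)
    moreover have "1 * real k < (\<delta>\<^sup>2 * real k) * real k"
      using False k by (intro mult_strict_right_mono) auto
    ultimately have Dk: "real k < (of_int D)\<^sup>2" by simp
    have E: "E = ((of_int D)\<^sup>2 - real k + 2) / 2"
      unfolding E_def D(1)[symmetric] by (simp add: power2_eq_square algebra_simps)
    have c: "(\<delta>\<^sup>2 * real k - 1) / 4 = ((of_int D)\<^sup>2 - real k) / (4 * real k)"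
      using k unfolding D(1)[symmetric] by (simp add: field_simps power2_eq_square)
    have dev: "quad_tail k x / E - 1 = ((of_int s)\<^sup>2 - (of_int D)\<^sup>2 - 1) / ((of_int D)\<^sup>2 - real k + 2)"
      using Dk k quad_tail_cube[OF x] unfolding s(1) E by (simp add: field_simps)
    have "((\<delta>\<^sup>2 * real k - 1) / 4) * \<bar>quad_tail k x / E - 1\<bar>
        = (((of_int D)\<^sup>2 - real k) / ((of_int D)\<^sup>2 - real k + 2))
          * (\<bar>(of_int s)\<^sup>2 - (of_int D)\<^sup>2 - 1\<bar> / (4 * real k))"
      unfolding dev c using Dk by (simp add: abs_divide field_simps)
    also have "\<dots> \<le> \<bar>(of_int s)\<^sup>2 - (of_int D)\<^sup>2 - 1\<bar> / (4 * real k)"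
      using Dk by (intro mult_left_le_one_le) auto
    also have "\<dots> \<le> 2 * real k * (2 * lin_obj \<delta> k x - 1) / (4 * real k)"
      using sq_bound by (intro divide_right_mono) auto
    also have "\<dots> = lin_obj \<delta> k x - 1 / 2"
      using k by (simp add: field_simps)
    finally show ?thesis using False by simp
  qed
qed

lemma KTW_bound:
  assumes KTW: "(bl, bq) \<in> KTW \<delta> k"
    and D: "\<delta> * real k = of_int D" "0 \<le> D" "D \<le> int k - 2"
  defines "E \<equiv> \<delta>\<^sup>2 * (real k)\<^sup>2 / 2 - real k / 2 + 1"
  shows "(\<delta>\<^sup>2 * real k - 1) * \<bar>(\<Sum>j=2..k. \<Sum>i=2..<j. bq i j) / E - 1\<bar> / 4 + 1 / 2
    \<le> \<delta> * real k * bl 1 + (\<Sum>i=2..k. bl i)"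
proof -
  define S where "S = {x \<in> cube k. Ppred \<delta> k x = 1}"
  define c where "c = (\<delta>\<^sup>2 * real k - 1) / 4"
  define \<Delta> where "\<Delta> = (\<Sum>j=2..k. \<Sum>i=2..<j. bq i j) / E - 1"
  have k: "1 \<le> k" using D by linarith
  obtain u where u: "\<forall>x\<in>S. 0 \<le> u x" "sum u S = 1"
    and lin: "\<delta> * real k * bl 1 + (\<Sum>i=2..k. bl i) = (\<Sum>x\<in>S. u x * lin_obj \<delta> k x)"
    and quad: "(\<Sum>j=2..k. \<Sum>i=2..<j. bq i j) = (\<Sum>x\<in>S. u x * quad_tail k x)"
    using KTW_memE[OF KTW k] unfolding S_def by blast
  have \<Delta>: "\<Delta> = (\<Sum>x\<in>S. u x * (quad_tail k x / E - 1))"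
    unfolding \<Delta>_def quad using u(2) by (simp add: sum_divide_distrib sum_subtractf right_diff_distrib)
  have "\<forall>x\<in>S. max 0 c * \<bar>quad_tail k x / E - 1\<bar> + 1 / 2 \<le> lin_obj \<delta> k x"
    using vertex_bound[OF _ _ D] by (simp add: S_def Ppred_eq_1_iff c_def E_def)
  from convex_comb_abs_le[OF u max.cobounded1 this]
  have "max 0 c * \<bar>\<Delta>\<bar> + 1 / 2 \<le> \<delta> * real k * bl 1 + (\<Sum>i=2..k. bl i)"
    unfolding \<Delta> lin .
  moreover have "c * \<bar>\<Delta>\<bar> \<le> max 0 c * \<bar>\<Delta>\<bar>"
    by (simp add: mult_right_mono)
  ultimately show ?thesis
    unfolding \<Delta>_def c_def by simp
qed

theorem lemma4p6:
  fixes \<delta>\<^sub>0 :: real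
  assumes "\<delta>\<^sub>0 > 0"
  shows "\<exists>k\<^sub>0::nat. \<forall>k::nat. \<forall>\<delta>::real. \<forall>bl bq.
    k \<ge> k\<^sub>0 \<longrightarrow> \<delta>\<^sub>0 \<le> \<delta> \<longrightarrow> \<delta> \<le> 1 - 2 / real k \<longrightarrow>
    (\<exists>m::int. odd m \<and> \<delta> * real k + real k - 1 = real_of_int m) \<longrightarrow>
    (bl, bq) \<in> KTW \<delta> k \<longrightarrow>
    (let \<alpha> = bl 1;
         \<beta> = (\<Sum>i=2..k. bl i);
         E = \<delta>\<^sup>2 * (real k)\<^sup>2 / 2 - real k / 2 + 1;
         \<Delta> = (\<Sum>j=2..k. \<Sum>i=2..<j. bq i j) / E - 1
     in \<delta> * real k * \<alpha> + \<beta> \<ge> (\<delta>\<^sup>2 * real k - 1) * \<bar>\<Delta>\<bar> / 4 + 1 / 2)"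
proof (rule exI[of _ 1], intro allI impI, unfold Let_def)
  fix k :: nat and \<delta> :: real and bl bq
  assume k: "1 \<le> k" and "\<delta>\<^sub>0 \<le> \<delta>" "\<delta> \<le> 1 - 2 / real k"
    and odd_m: "\<exists>m::int. odd m \<and> \<delta> * real k + real k - 1 = real_of_int m"
    and KTW: "(bl, bq) \<in> KTW \<delta> k"
  obtain m :: int where "\<delta> * real k + real k - 1 = of_int m" using odd_m by blast
  then have D: "\<delta> * real k = of_int (m - int k + 1)" by simp
  have "0 < \<delta> * real k" using assms \<open>\<delta>\<^sub>0 \<le> \<delta>\<close> k by simp
  moreover have "\<delta> * real k \<le> (1 - 2 / real k) * real k"
    using \<open>\<delta> \<le> 1 - 2 / real k\<close> by (intro mult_right_mono) auto
  moreover have "(1 - 2 / real k) * real k = real k - 2"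
    using k by (simp add: field_simps)
  ultimately have "0 \<le> m - int k + 1" "m - int k + 1 \<le> int k - 2"
    using D by linarith+
  from KTW_bound[OF KTW D this]
  show "(\<delta>\<^sup>2 * real k - 1) * \<bar>(\<Sum>j=2..k. \<Sum>i=2..<j. bq i j) / (\<delta>\<^sup>2 * (real k)\<^sup>2 / 2 - real k / 2 + 1) - 1\<bar> / 4
    + 1 / 2 \<le> \<delta> * real k * bl 1 + (\<Sum>i=2..k. bl i)" .
qed

end
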